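(* Let $\mu,\beta,\gamma$ be positive reals with $\gamma+\beta+\sqrt{\mu}<\frac{1}{2000}$. Let $G$ be a bipartite graph with bipartition $A\cup B$, $|A|=|B|=m$, minimum degree at least $\frac{m}{10}$ and at least $(1-\beta)m^2$ edges; let $\mathcal{F}$ be a $\mu m$-bounded incompatibility system over $G$; and let $e_i=\{a_i,b_i\}$ ($i=1,\dots,m$, $a_i\in A$, $b_i\in B$) be a perfect matching of $G$, with $f$ the bijection $f(a_i)=b_i$, $f(b_i)=a_i$. Suppose $P=(v_0,v_1,\dots,v_\ell)$ is a proper smooth path in $G$ such that there is no vertex $x\notin V(P)$ for which $(f(x),x,v_0,\dots,v_\ell)$ is a proper smooth path. Then there exists a set $Z\subseteq N(v_0)\cap V(P)$ with $|Z|\ge d(v_0)-(25\sqrt{\mu}+2\gamma)m$ such that for every $v_i\in Z$ the path $(v_{i-1},\dots,v_1,v_0,v_i,v_{i+1},\dots,v_\ell)$ is a proper smooth path.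
   Context: All graphs are finite and simple; $N(v)$, $d(v)$ are neighborhood and degree; $|P|$ is the number of vertices of $P$; $\gamma m$ is treated as an integer. An incompatibility system $\mathcal{F}$ over $G=(V,E)$ is a family $\{F_v\}_{v\in V}$ where each $F_v$ is a set of unordered pairs $\{e,e'\}$ of distinct edges with $e\cap e'=\{v\}$; edges are incompatible if the pair lies in some $F_v$, compatible otherwise. A path or cycle is compatible with $\mathcal{F}$ if every pair of its edges is compatible. $\mathcal{F}$ is $\Delta$-bounded if for every vertex $v$ and edge $e\ni v$, at most $\Delta$ other edges $e'\ni v$ satisfy $\{e,e'\}\in F_v$. For a path $P=(v_0,\dots,v_\ell)$ and a vertex $w$, a vertex $v_i\in V(P)$ adjacent to $w$ is a bad neighbor of $w$ in $P$ if $\{w,v_i\}$ is incompatible with $\{v_i,v_{i-1}\}$ or with $\{v_i,v_{i+1}\}$ (for those of these that are edges of $P$); $w$ is $\delta$-good for $P$ if it has fewer than $\delta|P|$ bad neighbors in $P$. A path or cycle $H$ of $G$ is proper if it contains all edges $e_1,\dots,e_{\gamma m}$ and $f(V(H)\cap A)=V(H)\cap B$. Let $X_A$ be the set of $x\in A$ for which there are at least $\sqrt{\mu}m$ indices $i$ such that $\{a_i,b_i\}$ and $\{x,b_i\}$ are incompatible edges, and $X_B$ the set of $y\in B$ for which there are at least $\sqrt{\mu}m$ indices $i$ such that $\{a_i,b_i\}$ and $\{a_i,y\}$ are incompatible edges. A proper path $P=(v_0,\dots,v_\ell)$ with $v_0\in A$, $v_\ell\in B$ is smooth if (i) $P$ is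 compatible with $\mathcal{F}$, (ii) $v_0$ and $v_\ell$ are $8\sqrt{\mu}$-good for $P$, and (iii) $v_0\notin X_A$ and $v_\ell\notin X_B$. (A "proper smooth path" is in particular required to have its first vertex in $A$ and last vertex in $B$.) *)

theory Defs
  imports Complex_Main
begin

definition nbhd :: "'a set set \<Rightarrow> 'a \<Rightarrow> 'a set" where
  "nbhd E v = {u. {v, u} \<in> E}"

definition deg :: "'a set set \<Rightarrow> 'a \<Rightarrow> nat" where
  "deg E v = card (nbhd E v)"

definition bipartite_graph :: "'a set set \<Rightarrow> 'a set \<Rightarrow> 'a set \<Rightarrow> bool" where
  "bipartite_graph E A B \<longleftrightarrow> finite A \<and> finite B \<and> A \<inter> B = {} \<and>
     (\<forall>e\<in>E. \<exists>x\<in>A. \<exists>y\<in>B. e = {x, y})"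

definition is_path :: "'a set set \<Rightarrow> 'a list \<Rightarrow> bool" where
  "is_path E P \<longleftrightarrow> P \<noteq> [] \<and> distinct P \<and> (\<forall>i. Suc i < length P \<longrightarrow> {P!i, P!Suc i} \<in> E)"

definition path_edges :: "'a list \<Rightarrow> 'a set set" where
  "path_edges P = {{P!i, P!Suc i} | i. Suc i < length P}"

definition incompatibility_system :: "'a set set \<Rightarrow> ('a \<Rightarrow> 'a set set set) \<Rightarrow> bool" where
  "incompatibility_system E F \<longleftrightarrow>
     (\<forall>v. \<forall>p\<in>F v. \<exists>e e'. p = {e, e'} \<and> e \<noteq> e' \<and> e \<in> E \<and> e' \<in> E \<and> e \<inter> e' = {v})"

definition incompatible :: "('a \<Rightarrow> 'a set set set) \<Rightarrow> 'a set \<Rightarrow> 'a set \<Rightarrow> bool" where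
  "incompatible F e e' \<longleftrightarrow> (\<exists>v. {e, e'} \<in> F v)"

definition bounded_sys :: "'a set set \<Rightarrow> ('a \<Rightarrow> 'a set set set) \<Rightarrow> real \<Rightarrow> bool" where
  "bounded_sys E F \<Delta> \<longleftrightarrow>
     (\<forall>v e. e \<in> E \<and> v \<in> e \<longrightarrow>
        real (card {e'\<in>E. v \<in> e' \<and> e' \<noteq> e \<and> {e, e'} \<in> F v}) \<le> \<Delta>)"

definition compatible_path :: "('a \<Rightarrow> 'a set set set) \<Rightarrow> 'a list \<Rightarrow> bool" where
  "compatible_path F P \<longleftrightarrow> (\<forall>e\<in>path_edges P. \<forall>e'\<in>path_edges P. \<not> incompatible F e e')"

definition bad_nbrs :: "'a set set \<Rightarrow> ('a \<Rightarrow> 'a set set set) \<Rightarrow> 'a list \<Rightarrow> 'a \<Rightarrow> 'a set" where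
  "bad_nbrs E F P w = {P!i | i. i < length P \<and> {w, P!i} \<in> E \<and>
      ((0 < i \<and> incompatible F {w, P!i} {P!i, P!(i - 1)}) \<or>
       (Suc i < length P \<and> incompatible F {w, P!i} {P!i, P!Suc i}))}"

definition good :: "'a set set \<Rightarrow> ('a \<Rightarrow> 'a set set set) \<Rightarrow> real \<Rightarrow> 'a list \<Rightarrow> 'a \<Rightarrow> bool" where
  "good E F \<delta> P w \<longleftrightarrow> real (card (bad_nbrs E F P w)) < \<delta> * real (length P)"

definition proper :: "'a set \<Rightarrow> 'a set \<Rightarrow> (nat \<Rightarrow> 'a) \<Rightarrow> (nat \<Rightarrow> 'a) \<Rightarrow> ('a \<Rightarrow> 'a) \<Rightarrow> nat \<Rightarrow> 'a list \<Rightarrow> bool" where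
  "proper A B a b f k H \<longleftrightarrow>
     (\<forall>i\<in>{1..k}. {a i, b i} \<in> path_edges H) \<and> f ` (set H \<inter> A) = set H \<inter> B"

definition X_A :: "('a \<Rightarrow> 'a set set set) \<Rightarrow> 'a set \<Rightarrow> (nat \<Rightarrow> 'a) \<Rightarrow> (nat \<Rightarrow> 'a) \<Rightarrow> nat \<Rightarrow> real \<Rightarrow> 'a set" where
  "X_A F A a b m \<mu> = {x\<in>A. real (card {i\<in>{1..m}. incompatible F {a i, b i} {x, b i}}) \<ge> sqrt \<mu> * real m}"

definition X_B :: "('a \<Rightarrow> 'a set set set) \<Rightarrow> 'a set \<Rightarrow> (nat \<Rightarrow> 'a) \<Rightarrow> (nat \<Rightarrow> 'a) \<Rightarrow> nat \<Rightarrow> real \<Rightarrow> 'a set" where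
  "X_B F B a b m \<mu> = {y\<in>B. real (card {i\<in>{1..m}. incompatible F {a i, b i} {a i, y}}) \<ge> sqrt \<mu> * real m}"

definition proper_smooth ::
  "'a set set \<Rightarrow> ('a \<Rightarrow> 'a set set set) \<Rightarrow> 'a set \<Rightarrow> 'a set \<Rightarrow> (nat \<Rightarrow> 'a) \<Rightarrow> (nat \<Rightarrow> 'a) \<Rightarrow>
   ('a \<Rightarrow> 'a) \<Rightarrow> nat \<Rightarrow> real \<Rightarrow> nat \<Rightarrow> 'a list \<Rightarrow> bool" where
  "proper_smooth E F A B a b f m \<mu> k H \<longleftrightarrow>
     is_path E H \<and> proper A B a b f k H \<and> hd H \<in> A \<and> last H \<in> B \<and>
     compatible_path F H \<and>
     good E F (8 * sqrt \<mu>) H (hd H) \<and> good E F (8 * sqrt \<mu>) H (last H) \<and>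
     hd H \<notin> X_A F A a b m \<mu> \<and> last H \<notin> X_B F B a b m \<mu>"

end

theory Submission
  imports Defs
begin

text \<open>
  Write v_0 = P ! 0. A neighbour x of v_0 off P extends P to the proper smooth path
  (f x, x, v_0, ..., v_l) unless a local obstruction occurs: {v_0, x} is incompatible with
  {v_0, v_1} or with {v_0, v_l}, the matching edge {f x, x} is incompatible with {x, v_0} or
  with {f x, v_l}, or f x lies in X_A or is not good; by maximality every neighbour off P is
  obstructed. Likewise the rotation at a neighbour v_i on P, trading {v_(i-1), v_i} for
  {v_0, v_i}, is proper and smooth unless {v_(i-1), v_i} is one of the prescribed matching
  edges, v_i is obstructed as above or is a bad neighbour of v_0, or the new end v_(i-1)
  lies in X_A or is not good. The obstructions are few: at most mu m vertices each by
  boundedness of the system, at most 16 sqrt(mu) m bad neighbours of v_0 since v_0 is good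
  and |P| <= 2m, and at most sqrt(mu) m vertices in X_A and sqrt(mu) m / 4 vertices that are
  not good, both by double counting incompatible pairs.
\<close>

section \<open>Paths and rotations\<close>

lemma path_edges_Nil [simp]: "path_edges [] = {}"
  and path_edges_singleton [simp]: "path_edges [x] = {}"
  by (simp_all add: path_edges_def)

lemma path_edges_Cons_Cons [simp]:
  "path_edges (x # y # xs) = insert {x, y} (path_edges (y # xs))"
  unfolding path_edges_def
proof (intro set_eqI iffI)
  fix e assume "e \<in> {{(x # y # xs) ! i, (x # y # xs) ! Suc i} |i. Suc i < length (x # y # xs)}"
  then obtain i where "e = {(x # y # xs) ! i, (x # y # xs) ! Suc i}" "Suc i < length (x # y # xs)"
    by blast
  then show "e \<in> insert {x, y} {{(y # xs) ! i, (y # xs) ! Suc i} |i. Suc i < length (y # xs)}"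
    by (cases i) auto
next
  fix e assume "e \<in> insert {x, y} {{(y # xs) ! i, (y # xs) ! Suc i} |i. Suc i < length (y # xs)}"
  then show "e \<in> {{(x # y # xs) ! i, (x # y # xs) ! Suc i} |i. Suc i < length (x # y # xs)}"
    by (auto intro: exI[of _ 0] exI[of _ "Suc _"])
qed

lemma path_edges_Cons: "P \<noteq> [] \<Longrightarrow> path_edges (x # P) = insert {x, P ! 0} (path_edges P)"
  by (cases P) auto

lemma path_edges_append:
  "xs \<noteq> [] \<Longrightarrow> ys \<noteq> [] \<Longrightarrow>
   path_edges (xs @ ys) = path_edges xs \<union> insert {last xs, hd ys} (path_edges ys)"
proof (induction xs rule: induct_list012)
  case (3 x y zs)
  then show ?case by auto
qed (auto simp: neq_Nil_conv)

lemma path_edges_rev [simp]: "path_edges (rev xs) = path_edges xs"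
proof (induction xs rule: induct_list012)
  case (3 x y zs)
  have "path_edges (rev (x # y # zs)) = path_edges (rev (y # zs) @ [x])" by simp
  also have "\<dots> = path_edges (y # zs) \<union> {{y, x}}"
    using path_edges_append[of "rev (y # zs)" "[x]"] 3 by (simp add: last_rev)
  finally show ?case by (auto simp: insert_commute)
qed simp_all

lemma path_edges_subset_set: "e \<in> path_edges P \<Longrightarrow> e \<subseteq> set P"
  by (auto simp: path_edges_def)

lemma path_edges_first:
  assumes "distinct P" "e \<in> path_edges P" "P ! 0 \<in> e"
  shows "e = {P ! 0, P ! 1}"
proof -
  obtain i where i: "e = {P ! i, P ! Suc i}" "Suc i < length P"
    using assms(2) by (auto simp: path_edges_def)
  have "P ! 0 \<noteq> P ! Suc i"
    using nth_eq_iff_index_eq[OF assms(1), of 0 "Suc i"] i(2) by linarith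
  then have "P ! 0 = P ! i" using assms(3) i(1) by auto
  then have "i = 0" using nth_eq_iff_index_eq[OF assms(1), of 0 i] i(2) by (cases P) auto
  then show ?thesis using i(1) by simp
qed

lemma is_path_iff: "is_path E P \<longleftrightarrow> P \<noteq> [] \<and> distinct P \<and> path_edges P \<subseteq> E"
  by (auto simp: is_path_def path_edges_def)

lemma last_take: "0 < i \<Longrightarrow> i \<le> length P \<Longrightarrow> last (take i P) = P ! (i - 1)"
  by (subst last_conv_nth) auto

definition rotation :: "nat \<Rightarrow> 'a list \<Rightarrow> 'a list"
  where "rotation i P = rev (take i P) @ drop i P"

lemma set_rotation [simp]: "set (rotation i P) = set P"
  and length_rotation [simp]: "length (rotation i P) = length P"
  and distinct_rotation [simp]: "distinct (rotation i P) = distinct P"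
proof -
  have "set (rev (take i P) @ drop i P) = set (take i P @ drop i P)"
    and "length (rev (take i P) @ drop i P) = length (take i P @ drop i P)"
    and "distinct (rev (take i P) @ drop i P) = distinct (take i P @ drop i P)"
    by (simp_all del: append_take_drop_id)
  then show "set (rotation i P) = set P" "length (rotation i P) = length P"
    "distinct (rotation i P) = distinct P"
    unfolding rotation_def append_take_drop_id by simp_all
qed

lemma hd_rotation: "0 < i \<Longrightarrow> i < length P \<Longrightarrow> hd (rotation i P) = P ! (i - 1)"
  by (auto simp: rotation_def hd_append hd_rev last_take)

lemma last_rotation: "i < length P \<Longrightarrow> last (rotation i P) = last P"
  by (simp add: rotation_def)

lemma path_edges_rotation:
  assumes "0 < i" "i < length P"
  shows "path_edges (rotation i P) \<subseteq> {{P ! 0, P ! i}} \<union> path_edges P"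
    and "path_edges P - {{P ! (i - 1), P ! i}} \<subseteq> path_edges (rotation i P)"
proof -
  have ne: "take i P \<noteq> []" "drop i P \<noteq> []" using assms by auto
  have ends: "last (take i P) = P ! (i - 1)" "hd (take i P) = P ! 0" "hd (drop i P) = P ! i"
    using assms by (auto simp: last_take hd_drop_conv_nth intro: hd_conv_nth)
  have "path_edges P = path_edges (take i P) \<union> insert {P ! (i - 1), P ! i} (path_edges (drop i P))"
    using path_edges_append[OF ne] ends by simp
  moreover have "path_edges (rotation i P) =
      path_edges (take i P) \<union> insert {P ! 0, P ! i} (path_edges (drop i P))"
    using path_edges_append[of "rev (take i P)" "drop i P"] ne ends
    by (simp add: rotation_def last_rev)
  ultimately show "path_edges (rotation i P) \<subseteq> {{P ! 0, P ! i}} \<union> path_edges P"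
    and "path_edges P - {{P ! (i - 1), P ! i}} \<subseteq> path_edges (rotation i P)"
    by blast+
qed

section \<open>Incompatible edges and bad neighbours\<close>

lemma incompatible_commute: "incompatible F e e' = incompatible F e' e"
  by (simp add: incompatible_def insert_commute)

lemma incompatibleD:
  assumes "incompatibility_system E F" "incompatible F e e'"
  shows "e \<in> E \<and> e' \<in> E \<and> e \<noteq> e' \<and> (\<exists>v. e \<inter> e' = {v} \<and> {e, e'} \<in> F v)"
proof -
  obtain v where v: "{e, e'} \<in> F v" using assms(2) by (auto simp: incompatible_def)
  then obtain p p' where p: "{e, e'} = {p, p'}" "p \<noteq> p'" "p \<in> E" "p' \<in> E" "p \<inter> p' = {v}"
    using assms(1) unfolding incompatibility_system_def by meson
  then have "(e = p \<and> e' = p') \<or> (e = p' \<and> e' = p)" by (simp add: doubleton_eq_iff)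
  then show ?thesis using p v by (auto simp: Int_commute)
qed

lemma not_incompatible_self: "incompatibility_system E F \<Longrightarrow> \<not> incompatible F e e"
  using incompatibleD by blast

lemma compatible_path_extension:
  assumes "compatible_path F P" "path_edges Q \<subseteq> N \<union> path_edges P"
    "\<And>e e'. e \<in> N \<Longrightarrow> e' \<in> path_edges Q \<Longrightarrow> \<not> incompatible F e e'"
  shows "compatible_path F Q"
  unfolding compatible_path_def
proof (intro ballI)
  fix e e' assume e: "e \<in> path_edges Q" and e': "e' \<in> path_edges Q"
  show "\<not> incompatible F e e'"
  proof (cases "e \<in> N \<or> e' \<in> N")
    case True
    then show ?thesis using assms(3) e e' incompatible_commute by metis
  next
    case False
    then show ?thesis using assms(1,2) e e' by (auto simp: compatible_path_def)
  qed
qed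

lemma bad_nbrs_eq:
  assumes "distinct P"
  shows "bad_nbrs E F P w =
    {u \<in> set P. {w, u} \<in> E \<and> (\<exists>e\<in>path_edges P. u \<in> e \<and> incompatible F {w, u} e)}"
proof (intro set_eqI iffI)
  fix u assume "u \<in> bad_nbrs E F P w"
  then obtain i where i: "u = P ! i" "i < length P" "{w, u} \<in> E"
    "(0 < i \<and> incompatible F {w, u} {u, P ! (i - 1)}) \<or>
     (Suc i < length P \<and> incompatible F {w, u} {u, P ! Suc i})"
    by (auto simp: bad_nbrs_def)
  have "{u, P ! (i - 1)} \<in> path_edges P" if "0 < i"
    using that i(1,2) by (auto simp: path_edges_def insert_commute intro!: exI[of _ "i - 1"])
  moreover have "{u, P ! Suc i} \<in> path_edges P" if "Suc i < length P"
    using that i(1) by (auto simp: path_edges_def)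
  ultimately show "u \<in> {u \<in> set P. {w, u} \<in> E \<and>
      (\<exists>e\<in>path_edges P. u \<in> e \<and> incompatible F {w, u} e)}"
    using i by auto
next
  fix u assume "u \<in> {u \<in> set P. {w, u} \<in> E \<and>
      (\<exists>e\<in>path_edges P. u \<in> e \<and> incompatible F {w, u} e)}"
  then obtain j where u: "{w, u} \<in> E" "Suc j < length P" "u = P ! j \<or> u = P ! Suc j"
    "incompatible F {w, u} {P ! j, P ! Suc j}"
    by (auto simp: path_edges_def)
  from u(3) show "u \<in> bad_nbrs E F P w"
  proof
    assume "u = P ! j"
    then show ?thesis using u unfolding bad_nbrs_def by auto
  next
    assume "u = P ! Suc j"
    then have "0 < Suc j \<and> incompatible F {w, P ! Suc j} {P ! Suc j, P ! (Suc j - 1)}"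
      using u(4) by (simp add: insert_commute)
    then show ?thesis using u \<open>u = P ! Suc j\<close> unfolding bad_nbrs_def
      by (intro CollectI exI[of _ "Suc j"]) auto
  qed
qed

lemma bad_nbrs_subset_set: "bad_nbrs E F P w \<subseteq> set P"
  by (auto simp: bad_nbrs_def)

lemma finite_bad_nbrs [simp]: "finite (bad_nbrs E F P w)"
  using finite_subset[OF bad_nbrs_subset_set] by auto

lemma good_if_new_edges_compatible:
  assumes good: "good E F \<delta> P w" and "0 \<le> \<delta>" and "distinct P" "distinct Q"
    and "length P \<le> length Q" and new: "path_edges Q \<subseteq> N \<union> path_edges P"
    and compatible: "\<And>u e. e \<in> N \<Longrightarrow> u \<in> e \<Longrightarrow> {w, u} \<in> E \<Longrightarrow> \<not> incompatible F {w, u} e"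
  shows "good E F \<delta> Q w"
proof -
  have "bad_nbrs E F Q w \<subseteq> bad_nbrs E F P w"
  proof
    fix u assume "u \<in> bad_nbrs E F Q w"
    then obtain e where e: "{w, u} \<in> E" "e \<in> path_edges Q" "u \<in> e" "incompatible F {w, u} e"
      using \<open>distinct Q\<close> by (auto simp: bad_nbrs_eq)
    then have "e \<in> path_edges P" using new compatible by blast
    moreover have "u \<in> set P" using path_edges_subset_set[OF calculation] e(3) by blast
    ultimately show "u \<in> bad_nbrs E F P w" using e \<open>distinct P\<close> by (auto simp: bad_nbrs_eq)
  qed
  then have "card (bad_nbrs E F Q w) \<le> card (bad_nbrs E F P w)"
    by (simp add: card_mono)
  moreover have "\<delta> * real (length P) \<le> \<delta> * real (length Q)"
    using assms(2,5) by (simp add: mult_left_mono)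
  ultimately show ?thesis using good by (simp add: good_def)
qed

definition incompatible_nbrs :: "'a set set \<Rightarrow> ('a \<Rightarrow> 'a set set set) \<Rightarrow> 'a \<Rightarrow> 'a set \<Rightarrow> 'a set"
  where "incompatible_nbrs E F v e = {w. {w, v} \<in> E \<and> incompatible F {w, v} e}"

lemma card_incompatible_nbrs_le:
  assumes sys: "incompatibility_system E F" and bnd: "bounded_sys E F \<Delta>"
    and "finite E" "v \<in> e" "0 \<le> \<Delta>"
  shows "finite (incompatible_nbrs E F v e) \<and> real (card (incompatible_nbrs E F v e)) \<le> \<Delta>"
proof (cases "incompatible_nbrs E F v e = {}")
  case True
  then show ?thesis using assms(5) by simp
next
  case False
  then have "e \<in> E" using incompatibleD[OF sys] by (auto simp: incompatible_nbrs_def)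
  define S where "S = {e' \<in> E. v \<in> e' \<and> e' \<noteq> e \<and> {e, e'} \<in> F v}"
  have inj: "inj_on (\<lambda>w. {w, v}) (incompatible_nbrs E F v e)"
    by (rule inj_onI) (metis doubleton_eq_iff)
  have "(\<lambda>w. {w, v}) ` incompatible_nbrs E F v e \<subseteq> S"
  proof
    fix x assume "x \<in> (\<lambda>w. {w, v}) ` incompatible_nbrs E F v e"
    then obtain w where x: "x = {w, v}" "{w, v} \<in> E" "incompatible F {w, v} e"
      by (auto simp: incompatible_nbrs_def)
    then obtain u where "{w, v} \<noteq> e" "{w, v} \<inter> e = {u}" "{{w, v}, e} \<in> F u"
      using incompatibleD[OF sys] by blast
    moreover have "u = v" using \<open>v \<in> e\<close> calculation(2) by auto
    ultimately show "x \<in> S" using x by (auto simp: S_def insert_commute)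
  qed
  moreover have "finite S" using \<open>finite E\<close> by (simp add: S_def)
  ultimately have "finite (incompatible_nbrs E F v e)"
    and "card (incompatible_nbrs E F v e) \<le> card S"
    using inj by (auto intro: card_inj_on_le dest: finite_imageD finite_subset)
  moreover have "real (card S) \<le> \<Delta>"
    using bnd \<open>e \<in> E\<close> \<open>v \<in> e\<close> unfolding bounded_sys_def S_def by blast
  ultimately show ?thesis by simp
qed

lemma bipartite_edge_cases:
  "bipartite_graph E A B \<Longrightarrow> {x, y} \<in> E \<Longrightarrow> (x \<in> A \<and> y \<in> B) \<or> (x \<in> B \<and> y \<in> A)"
  unfolding bipartite_graph_def by (metis doubleton_eq_iff)

lemma bipartite_disjoint: "bipartite_graph E A B \<Longrightarrow> A \<inter> B = {}"
  unfolding bipartite_graph_def by blast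

lemma bipartite_edge_A:
  "bipartite_graph E A B \<Longrightarrow> {x, y} \<in> E \<Longrightarrow> x \<in> A \<Longrightarrow> y \<in> B \<and> y \<notin> A"
  using bipartite_edge_cases[of E A B x y] bipartite_disjoint[of E A B] by blast

lemma bipartite_edge_B:
  "bipartite_graph E A B \<Longrightarrow> {x, y} \<in> E \<Longrightarrow> x \<in> B \<Longrightarrow> y \<in> A \<and> y \<notin> B"
  using bipartite_edge_cases[of E A B x y] bipartite_disjoint[of E A B] by blast

lemma bipartite_no_loop: "bipartite_graph E A B \<Longrightarrow> {x, x} \<notin> E"
  using bipartite_edge_cases[of E A B x x] bipartite_disjoint[of E A B] by blast

lemma finite_edges_bipartite:
  assumes "bipartite_graph E A B"
  shows "finite E"
proof -
  have "E \<subseteq> (\<lambda>(x, y). {x, y}) ` (A \<times> B)"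
    using assms unfolding bipartite_graph_def by fastforce
  moreover have "finite (A \<times> B)" using assms unfolding bipartite_graph_def by simp
  ultimately show ?thesis using finite_subset by blast
qed

lemma card_le_by_double_counting:
  assumes "finite X" "finite Y" "S \<subseteq> X" "0 < t"
    and lower: "\<And>x. x \<in> S \<Longrightarrow> t \<le> real (card {y \<in> Y. R x y})"
    and upper: "\<And>y. y \<in> Y \<Longrightarrow> real (card {x \<in> X. R x y}) \<le> D"
  shows "real (card S) \<le> real (card Y) * D / t"
proof -
  have count: "card {y \<in> Y. Q y} = (\<Sum>y\<in>Y. if Q y then 1 else 0)"
    if "finite Y" for Y and Q :: "'c \<Rightarrow> bool"
    using that by (simp add: sum.If_cases Int_def)
  have swap: "(\<Sum>x\<in>X. card {y \<in> Y. R x y}) = (\<Sum>y\<in>Y. card {x \<in> X. R x y})"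
    using assms(1,2) by (simp add: count sum.swap[of _ X Y])
  have "real (card S) * t \<le> (\<Sum>x\<in>S. real (card {y \<in> Y. R x y}))"
    using lower by (simp add: sum_bounded_below)
  also have "\<dots> \<le> (\<Sum>x\<in>X. real (card {y \<in> Y. R x y}))"
    using assms(1,3) by (simp add: sum_mono2)
  also have "\<dots> = (\<Sum>y\<in>Y. real (card {x \<in> X. R x y}))"
    by (simp only: of_nat_sum[symmetric] swap)
  also have "\<dots> \<le> real (card Y) * D"
    by (rule sum_bounded_above) (rule upper)
  finally show ?thesis using assms(4) by (simp add: pos_le_divide_eq)
qed

lemma card_nth_indices:
  assumes "distinct P"
  shows "card {i \<in> {..<length P}. P ! i \<in> S} = card (S \<inter> set P)"
proof -
  have "inj_on (nth P) {i \<in> {..<length P}. P ! i \<in> S}"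
    using assms by (auto simp: inj_on_def nth_eq_iff_index_eq)
  moreover have "nth P ` {i \<in> {..<length P}. P ! i \<in> S} = S \<inter> set P"
    by (auto simp: in_set_conv_nth)
  ultimately show ?thesis using card_image by fastforce
qed

lemma card_nth_indices_le:
  "distinct P \<Longrightarrow> finite S \<Longrightarrow> card {i \<in> {..<length P}. P ! i \<in> S} \<le> card S"
  unfolding card_nth_indices by (simp add: card_mono)

lemma card_predecessor_indices_le:
  assumes "distinct P" "finite S"
  shows "card {i \<in> {..<length P}. 0 < i \<and> P ! (i - 1) \<in> S} \<le> card S"
proof (rule card_inj_on_le[OF _ _ assms(2)])
  show "inj_on (\<lambda>i. P ! (i - 1)) {i \<in> {..<length P}. 0 < i \<and> P ! (i - 1) \<in> S}"
    using assms(1) by (auto simp: inj_on_def nth_eq_iff_index_eq)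
qed auto

lemma card_edge_indices_le:
  assumes "distinct P" "finite M"
  shows "card {i \<in> {..<length P}. 0 < i \<and> {P ! (i - 1), P ! i} \<in> M} \<le> card M"
proof (rule card_inj_on_le[OF _ _ assms(2)])
  show "inj_on (\<lambda>i. {P ! (i - 1), P ! i}) {i \<in> {..<length P}. 0 < i \<and> {P ! (i - 1), P ! i} \<in> M}"
  proof (rule inj_onI)
    fix i j
    assume "i \<in> {i \<in> {..<length P}. 0 < i \<and> {P ! (i - 1), P ! i} \<in> M}"
      and "j \<in> {i \<in> {..<length P}. 0 < i \<and> {P ! (i - 1), P ! i} \<in> M}"
      and eq: "{P ! (i - 1), P ! i} = {P ! (j - 1), P ! j}"
    then have ij: "0 < i" "i < length P" "0 < j" "j < length P" by auto
    from eq consider "P ! i = P ! j" | "P ! (i - 1) = P ! j" "P ! i = P ! (j - 1)"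
      by (auto simp: doubleton_eq_iff)
    then show "i = j"
      by cases (use ij assms(1) in \<open>auto simp: nth_eq_iff_index_eq\<close>)
  qed
qed auto

section \<open>A maximal proper smooth path\<close>

locale maximal_smooth_path =
  fixes E :: "'a set set" and F :: "'a \<Rightarrow> 'a set set set"
    and A B :: "'a set" and a b :: "nat \<Rightarrow> 'a" and f :: "'a \<Rightarrow> 'a"
    and m :: nat and \<mu> \<gamma> :: real and P :: "'a list"
  assumes mu_pos: "0 < \<mu>" and mu_le_1: "\<mu> \<le> 1" and gamma_nonneg: "0 \<le> \<gamma>"
    and bip: "bipartite_graph E A B"
    and card_A: "card A = m" and card_B: "card B = m"
    and sys: "incompatibility_system E F"
    and bnd: "bounded_sys E F (\<mu> * real m)"
    and a_bij: "bij_betw a {1..m} A" and b_bij: "bij_betw b {1..m} B"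
    and matching: "\<forall>i\<in>{1..m}. {a i, b i} \<in> E"
    and f_matching: "\<forall>i\<in>{1..m}. f (a i) = b i \<and> f (b i) = a i"
    and P_smooth: "proper_smooth E F A B a b f m \<mu> (nat \<lfloor>\<gamma> * real m\<rfloor>) P"
    and maximal: "\<forall>x. x \<notin> set P \<longrightarrow>
                    \<not> proper_smooth E F A B a b f m \<mu> (nat \<lfloor>\<gamma> * real m\<rfloor>) (f x # x # P)"
begin

abbreviation "k \<equiv> nat \<lfloor>\<gamma> * real m\<rfloor>"
abbreviation "smooth \<equiv> proper_smooth E F A B a b f m \<mu> k"
abbreviation "X\<^sub>A \<equiv> X_A F A a b m \<mu>"
abbreviation "X\<^sub>B \<equiv> X_B F B a b m \<mu>"

lemma sqrt_mu_pos: "0 < sqrt \<mu>"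
  using mu_pos by simp

lemma mu_le_sqrt_mu: "\<mu> \<le> sqrt \<mu>"
proof -
  have "sqrt \<mu> * sqrt \<mu> \<le> sqrt \<mu> * 1"
    using mu_le_1 sqrt_mu_pos by (intro mult_left_mono) auto
  then show ?thesis using mu_pos by simp
qed

lemma finite_A: "finite A" and finite_B: "finite B"
  using bip unfolding bipartite_graph_def by auto

lemma finite_E: "finite E"
  using finite_edges_bipartite[OF bip] .

lemma P_ne: "P \<noteq> []" and distinct_P: "distinct P" and path_edges_P: "path_edges P \<subseteq> E"
  and P_proper: "proper A B a b f k P" and P_compatible: "compatible_path F P"
  and first_A: "P ! 0 \<in> A" and last_B: "last P \<in> B"
  and first_good: "good E F (8 * sqrt \<mu>) P (P ! 0)"
  and last_good: "good E F (8 * sqrt \<mu>) P (last P)"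
  and first_notin_X_A: "P ! 0 \<notin> X\<^sub>A" and last_notin_X_B: "last P \<notin> X\<^sub>B"
  using P_smooth by (auto simp: proper_smooth_def is_path_iff hd_conv_nth)

lemma set_P_subset: "set P \<subseteq> A \<union> B"
proof
  fix u assume "u \<in> set P"
  then obtain j where j: "j < length P" "u = P ! j" by (auto simp: in_set_conv_nth)
  show "u \<in> A \<union> B"
  proof (cases "Suc j < length P")
    case True
    then have "{P ! j, P ! Suc j} \<in> E" using path_edges_P by (auto simp: path_edges_def)
    then show ?thesis using bipartite_edge_cases[OF bip] j by blast
  next
    case False
    then have "j = length P - 1" using j by simp
    then show ?thesis using j last_B P_ne by (simp add: last_conv_nth)
  qed
qed

lemma length_P_le: "length P \<le> 2 * m"
proof -
  have "length P = card (set P)" using distinct_P by (simp add: distinct_card)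
  also have "\<dots> \<le> card (A \<union> B)" using set_P_subset finite_A finite_B by (simp add: card_mono)
  also have "\<dots> \<le> card A + card B" by (rule card_Un_le)
  finally show ?thesis using card_A card_B by simp
qed

lemma m_pos: "0 < m"
  using first_A card_A finite_A by (auto simp: card_gt_0_iff)

lemma card_incompatible_nbrs:
  "v \<in> e \<Longrightarrow> finite (incompatible_nbrs E F v e) \<and>
    real (card (incompatible_nbrs E F v e)) \<le> \<mu> * real m"
  using card_incompatible_nbrs_le[OF sys bnd finite_E] mu_pos by simp

lemma matching_partner:
  assumes "x \<in> B"
  shows "\<exists>i\<in>{1..m}. x = b i \<and> f x = a i \<and> f (f x) = x \<and> f x \<in> A \<and> {f x, x} \<in> E"
proof -
  obtain i where "i \<in> {1..m}" "x = b i" using assms b_bij by (auto simp: bij_betw_def)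
  then show ?thesis using f_matching matching a_bij by (auto simp: bij_betw_def)
qed

lemma inj_on_f_B: "inj_on f B"
  by (rule inj_onI) (metis matching_partner)

lemma card_X_A_le: "real (card X\<^sub>A) \<le> sqrt \<mu> * real m"
proof -
  have "real (card X\<^sub>A) \<le> real (card {1..m}) * (\<mu> * real m) / (sqrt \<mu> * real m)"
  proof (rule card_le_by_double_counting[OF finite_A finite_atLeastAtMost])
    fix i assume "i \<in> {1..m}"
    have "{x \<in> A. incompatible F {a i, b i} {x, b i}} \<subseteq> incompatible_nbrs E F (b i) {a i, b i}"
      using incompatibleD[OF sys] by (auto simp: incompatible_nbrs_def incompatible_commute)
    with card_incompatible_nbrs[of "b i" "{a i, b i}"]
    show "real (card {x \<in> A. incompatible F {a i, b i} {x, b i}}) \<le> \<mu> * real m"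
      by (meson card_mono of_nat_le_iff order_trans insertI2 singletonI)
  qed (use sqrt_mu_pos m_pos in \<open>auto simp: X_A_def\<close>)
  also have "\<dots> = \<mu> / sqrt \<mu> * real m"
    using m_pos by simp
  also have "\<dots> = sqrt \<mu> * real m"
    using mu_pos by (simp add: real_div_sqrt)
  finally show ?thesis .
qed

definition not_good_A :: "'a set"
  where "not_good_A = {w \<in> A. \<not> good E F (8 * sqrt \<mu>) P w}"

lemma card_vertices_with_bad_nbr_le:
  assumes "j < length P"
  shows "real (card {w \<in> A. P ! j \<in> bad_nbrs E F P w}) \<le> 2 * (\<mu> * real m)"
proof -
  let ?W1 = "incompatible_nbrs E F (P ! j) {P ! j, P ! (j - 1)}"
    and ?W2 = "incompatible_nbrs E F (P ! j) {P ! j, P ! Suc j}"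
  have "{w \<in> A. P ! j \<in> bad_nbrs E F P w} \<subseteq> ?W1 \<union> ?W2"
  proof
    fix w assume "w \<in> {w \<in> A. P ! j \<in> bad_nbrs E F P w}"
    then obtain i where "P ! j = P ! i" "i < length P" "{w, P ! i} \<in> E"
      "(0 < i \<and> incompatible F {w, P ! i} {P ! i, P ! (i - 1)}) \<or>
       (Suc i < length P \<and> incompatible F {w, P ! i} {P ! i, P ! Suc i})"
      by (auto simp: bad_nbrs_def)
    moreover from this have "i = j" using assms distinct_P by (simp add: nth_eq_iff_index_eq)
    ultimately show "w \<in> ?W1 \<union> ?W2" by (auto simp: incompatible_nbrs_def)
  qed
  moreover have "finite ?W1" "finite ?W2"
    and W: "real (card ?W1) \<le> \<mu> * real m" "real (card ?W2) \<le> \<mu> * real m"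
    using card_incompatible_nbrs by auto
  ultimately have "card {w \<in> A. P ! j \<in> bad_nbrs E F P w} \<le> card ?W1 + card ?W2"
    by (meson card_Un_le card_mono finite_UnI order_trans)
  then show ?thesis using W by linarith
qed

lemma card_not_good_A_le: "real (card not_good_A) \<le> sqrt \<mu> * real m / 4"
proof -
  let ?n = "length P"
  have "real (card not_good_A) \<le> real (card {..<?n}) * (2 * (\<mu> * real m)) / (8 * sqrt \<mu> * real ?n)"
  proof (rule card_le_by_double_counting[OF finite_A finite_lessThan])
    fix w assume "w \<in> not_good_A"
    moreover have "card {j \<in> {..<?n}. P ! j \<in> bad_nbrs E F P w} = card (bad_nbrs E F P w)"
      using card_nth_indices[OF distinct_P] bad_nbrs_subset_set by (metis Int_absorb2)
    ultimately show "8 * sqrt \<mu> * real ?n \<le> real (card {j \<in> {..<?n}. P ! j \<in> bad_nbrs E F P w})"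
      by (auto simp: not_good_A_def good_def)
  qed (use card_vertices_with_bad_nbr_le sqrt_mu_pos P_ne in \<open>auto simp: not_good_A_def\<close>)
  also have "\<dots> = \<mu> / sqrt \<mu> * real m / 4"
    using P_ne by simp
  also have "\<dots> = sqrt \<mu> * real m / 4"
    using mu_pos by (simp add: real_div_sqrt)
  finally show ?thesis .
qed

lemma card_X_A_Un_not_good_A:
  "finite (X\<^sub>A \<union> not_good_A) \<and> real (card (X\<^sub>A \<union> not_good_A)) \<le> 3 / 2 * sqrt \<mu> * real m"
proof
  show "finite (X\<^sub>A \<union> not_good_A)"
    using finite_A by (auto simp: X_A_def not_good_A_def intro: finite_subset)
  show "real (card (X\<^sub>A \<union> not_good_A)) \<le> 3 / 2 * sqrt \<mu> * real m"
    using card_X_A_le card_not_good_A_le card_Un_le[of X\<^sub>A not_good_A] sqrt_mu_pos by simp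
qed

lemma card_bad_nbrs_first_le: "real (card (bad_nbrs E F P (P ! 0))) \<le> 16 * sqrt \<mu> * real m"
proof -
  have "real (card (bad_nbrs E F P (P ! 0))) < 8 * sqrt \<mu> * real (length P)"
    using first_good by (simp add: good_def)
  also have "\<dots> \<le> 8 * sqrt \<mu> * (2 * real m)"
    using length_P_le sqrt_mu_pos by (intro mult_left_mono) auto
  finally show ?thesis by simp
qed

lemma rotation_pivot:
  assumes "0 < i" "i < length P" "{P ! 0, P ! i} \<in> E"
  shows "P ! i \<in> B" and "P ! (i - 1) \<in> A" and "{P ! (i - 1), P ! i} \<in> path_edges P"
proof -
  show "P ! i \<in> B" using bipartite_edge_A[OF bip assms(3) first_A] by blast
  show edge: "{P ! (i - 1), P ! i} \<in> path_edges P"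
    using assms(1,2) unfolding path_edges_def by (auto intro!: exI[of _ "i - 1"])
  then have "{P ! i, P ! (i - 1)} \<in> E" using path_edges_P by (auto simp: insert_commute)
  then show "P ! (i - 1) \<in> A" using bipartite_edge_B[OF bip _ \<open>P ! i \<in> B\<close>] by blast
qed

lemma rotation_compatible:
  assumes i: "0 < i" "i < length P" and adj: "{P ! 0, P ! i} \<in> E"
    and not_first: "P ! i \<notin> incompatible_nbrs E F (P ! 0) {P ! 0, P ! 1}"
    and not_bad: "P ! i \<notin> bad_nbrs E F P (P ! 0)"
  shows "compatible_path F (rotation i P)"
proof (rule compatible_path_extension[OF P_compatible path_edges_rotation(1)[OF i]])
  fix e e' assume "e \<in> {{P ! 0, P ! i}}" and e': "e' \<in> path_edges (rotation i P)"
  then have e: "e = {P ! 0, P ! i}" by simp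
  show "\<not> incompatible F e e'"
  proof
    assume inc: "incompatible F e e'"
    then have "e' \<noteq> e" using not_incompatible_self[OF sys] by metis
    then have e'P: "e' \<in> path_edges P" using e' e path_edges_rotation(1)[OF i] by blast
    obtain u where "e \<inter> e' = {u}" using incompatibleD[OF sys inc] by metis
    then have u: "u \<in> e'" "u = P ! 0 \<or> u = P ! i" using e by auto
    from u(2) show False
    proof
      assume "u = P ! 0"
      then have "e' = {P ! 0, P ! 1}" using path_edges_first[OF distinct_P e'P] u(1) by simp
      then have "P ! i \<in> incompatible_nbrs E F (P ! 0) {P ! 0, P ! 1}"
        using inc adj e by (simp add: incompatible_nbrs_def insert_commute)
      then show False using not_first by contradiction
    next
      assume "u = P ! i"
      then have "P ! i \<in> bad_nbrs E F P (P ! 0)"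
        using inc adj i e'P u(1) e by (auto simp: bad_nbrs_eq[OF distinct_P])
      then show False using not_bad by contradiction
    qed
  qed
qed

lemma rotation_first_good:
  assumes i: "0 < i" "i < length P" and adj: "{P ! 0, P ! i} \<in> E"
    and not_bad: "P ! i \<notin> bad_nbrs E F P (P ! 0)"
    and pred_good: "P ! (i - 1) \<notin> not_good_A"
  shows "good E F (8 * sqrt \<mu>) (rotation i P) (P ! (i - 1))"
proof (rule good_if_new_edges_compatible[OF _ _ distinct_P _ _ path_edges_rotation(1)[OF i]])
  show "good E F (8 * sqrt \<mu>) P (P ! (i - 1))"
    using pred_good rotation_pivot(2)[OF i adj] by (simp add: not_good_A_def)
  fix u e assume "e \<in> {{P ! 0, P ! i}}" "u \<in> e" "{P ! (i - 1), u} \<in> E"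
  moreover have "u \<noteq> P ! 0"
    using calculation(3) bipartite_edge_A[OF bip _ rotation_pivot(2)[OF i adj]] first_A by blast
  ultimately have e: "e = {P ! 0, P ! i}" and u: "u = P ! i" by auto
  show "\<not> incompatible F {P ! (i - 1), u} e"
  proof
    assume "incompatible F {P ! (i - 1), u} e"
    then have "incompatible F {P ! 0, P ! i} {P ! (i - 1), P ! i}"
      using e u by (simp add: incompatible_commute)
    then have "P ! i \<in> bad_nbrs E F P (P ! 0)"
      unfolding bad_nbrs_eq[OF distinct_P]
      using adj i rotation_pivot(3)[OF i adj] nth_mem[OF i(2)] by blast
    then show False using not_bad by contradiction
  qed
qed (use sqrt_mu_pos distinct_P in auto)

lemma rotation_last_good:
  assumes i: "0 < i" "i < length P" and adj: "{P ! 0, P ! i} \<in> E"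
    and not_last: "P ! i \<notin> incompatible_nbrs E F (P ! 0) {last P, P ! 0}"
  shows "good E F (8 * sqrt \<mu>) (rotation i P) (last P)"
proof (rule good_if_new_edges_compatible[OF last_good _ distinct_P _ _ path_edges_rotation(1)[OF i]])
  fix u e assume "e \<in> {{P ! 0, P ! i}}" "u \<in> e" "{last P, u} \<in> E"
  moreover have "u \<noteq> P ! i"
    using calculation(3) bipartite_edge_B[OF bip _ last_B] rotation_pivot(1)[OF i adj] by blast
  ultimately have e: "e = {P ! 0, P ! i}" and u: "u = P ! 0" by auto
  show "\<not> incompatible F {last P, u} e"
    using not_last adj e u by (auto simp: incompatible_nbrs_def incompatible_commute insert_commute)
qed (use sqrt_mu_pos distinct_P in auto)

lemma rotation_smooth:
  assumes i: "0 < i" "i < length P" and adj: "{P ! 0, P ! i} \<in> E"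
    and keeps_matching: "{P ! (i - 1), P ! i} \<notin> (\<lambda>j. {a j, b j}) ` {1..k}"
    and not_first: "P ! i \<notin> incompatible_nbrs E F (P ! 0) {P ! 0, P ! 1}"
    and not_bad: "P ! i \<notin> bad_nbrs E F P (P ! 0)"
    and not_last: "P ! i \<notin> incompatible_nbrs E F (P ! 0) {last P, P ! 0}"
    and pred_ok: "P ! (i - 1) \<notin> X\<^sub>A \<union> not_good_A"
  shows "smooth (rotation i P)"
proof -
  have "rotation i P \<noteq> []" using P_ne length_rotation by (metis length_0_conv)
  then have path: "is_path E (rotation i P)"
    using path_edges_rotation(1)[OF i] path_edges_P adj distinct_P by (auto simp: is_path_iff)
  have "{a j, b j} \<in> path_edges (rotation i P)" if "j \<in> {1..k}" for j
  proof -
    have "{a j, b j} \<in> path_edges P" using P_proper that by (simp add: proper_def)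
    moreover have "{a j, b j} \<noteq> {P ! (i - 1), P ! i}" using keeps_matching that by blast
    ultimately show ?thesis using path_edges_rotation(2)[OF i] by blast
  qed
  then have proper: "proper A B a b f k (rotation i P)"
    using P_proper by (simp add: proper_def)
  show ?thesis
    using path proper rotation_compatible[OF i adj not_first not_bad] rotation_first_good[OF i adj not_bad]
      rotation_last_good[OF i adj not_last] rotation_pivot(2)[OF i adj] pred_ok
      last_B last_notin_X_B hd_rotation[OF i] last_rotation[OF i(2)]
    by (simp add: proper_smooth_def)
qed

lemma extension_vertices:
  assumes adj: "{P ! 0, x} \<in> E" and off: "x \<notin> set P"
  shows "x \<in> B" "f x \<in> A" "f x \<notin> set P" "{f x, x} \<in> E" "f (f x) = x"
    and "distinct (f x # x # P)"
proof -
  show "x \<in> B" using bipartite_edge_A[OF bip adj first_A] by blast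
  then show "f x \<in> A" "{f x, x} \<in> E" and ffx: "f (f x) = x"
    using matching_partner by blast+
  show "f x \<notin> set P"
  proof
    assume "f x \<in> set P"
    then have "x \<in> f ` (set P \<inter> A)" using ffx \<open>f x \<in> A\<close> by (metis IntI imageI)
    then show False using P_proper off by (simp add: proper_def)
  qed
  then show "distinct (f x # x # P)"
    using distinct_P off \<open>x \<in> B\<close> \<open>f x \<in> A\<close> bipartite_disjoint[OF bip] by auto
qed

lemma path_edges_extension:
  "path_edges (f x # x # P) = {{f x, x}, {x, P ! 0}} \<union> path_edges P"
  using P_ne by (simp add: path_edges_Cons)

lemma extension_compatible:
  assumes adj: "{P ! 0, x} \<in> E" and off: "x \<notin> set P"
    and not_first: "x \<notin> incompatible_nbrs E F (P ! 0) {P ! 0, P ! 1}"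
    and through: "\<not> incompatible F {f x, x} {x, P ! 0}"
  shows "compatible_path F (f x # x # P)"
proof (rule compatible_path_extension[OF P_compatible equalityD1[OF path_edges_extension]])
  fix e e' assume e: "e \<in> {{f x, x}, {x, P ! 0}}" and e': "e' \<in> path_edges (f x # x # P)"
  show "\<not> incompatible F e e'"
  proof
    assume inc: "incompatible F e e'"
    show False
    proof (cases "e' \<in> {{f x, x}, {x, P ! 0}}")
      case True
      then show False
        using e inc through not_incompatible_self[OF sys] incompatible_commute by blast
    next
      case False
      then have e'P: "e' \<in> path_edges P" using e' path_edges_extension by blast
      obtain u where "e \<inter> e' = {u}" using incompatibleD[OF sys inc] by metis
      then have "u \<in> e" "u \<in> e'" by auto
      then have "u \<in> set P" using path_edges_subset_set[OF e'P] by blast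
      then have "e = {x, P ! 0}" "u = P ! 0"
        using e \<open>u \<in> e\<close> off extension_vertices(3)[OF adj off] by auto
      then have "e' = {P ! 0, P ! 1}" using path_edges_first[OF distinct_P e'P] \<open>u \<in> e'\<close> by simp
      then have "x \<in> incompatible_nbrs E F (P ! 0) {P ! 0, P ! 1}"
        using inc \<open>e = {x, P ! 0}\<close> adj by (simp add: incompatible_nbrs_def insert_commute)
      then show False using not_first by contradiction
    qed
  qed
qed

lemma extension_first_good:
  assumes adj: "{P ! 0, x} \<in> E" and off: "x \<notin> set P"
    and through: "\<not> incompatible F {f x, x} {x, P ! 0}"
    and partner_good: "f x \<notin> not_good_A"
  shows "good E F (8 * sqrt \<mu>) (f x # x # P) (f x)"
proof (rule good_if_new_edges_compatible[OF _ _ distinct_P extension_vertices(6)[OF adj off] _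
      equalityD1[OF path_edges_extension]])
  show "good E F (8 * sqrt \<mu>) P (f x)"
    using partner_good extension_vertices(2)[OF adj off] by (simp add: not_good_A_def)
  fix u e assume e: "e \<in> {{f x, x}, {x, P ! 0}}" and "u \<in> e" "{f x, u} \<in> E"
  moreover have "u \<noteq> f x" using calculation(3) bipartite_no_loop[OF bip] by metis
  moreover have "u \<noteq> P ! 0"
    using calculation(3) bipartite_edge_A[OF bip _ extension_vertices(2)[OF adj off]] first_A
    by blast
  ultimately have "u = x" by blast
  with e show "\<not> incompatible F {f x, u} e"
    using through not_incompatible_self[OF sys] by auto
qed (use sqrt_mu_pos in auto)

lemma extension_last_good:
  assumes adj: "{P ! 0, x} \<in> E" and off: "x \<notin> set P"
    and not_last: "x \<notin> incompatible_nbrs E F (P ! 0) {last P, P ! 0}"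
    and partner_last: "\<not> incompatible F {last P, f x} {f x, x}"
  shows "good E F (8 * sqrt \<mu>) (f x # x # P) (last P)"
proof (rule good_if_new_edges_compatible[OF last_good _ distinct_P extension_vertices(6)[OF adj off] _
      equalityD1[OF path_edges_extension]])
  fix u e assume e: "e \<in> {{f x, x}, {x, P ! 0}}" and "u \<in> e" "{last P, u} \<in> E"
  moreover have "u \<noteq> x"
    using calculation(3) bipartite_edge_B[OF bip _ last_B] extension_vertices(1)[OF adj off]
    by blast
  ultimately have "(u = f x \<and> e = {f x, x}) \<or> (u = P ! 0 \<and> e = {x, P ! 0})" by auto
  then show "\<not> incompatible F {last P, u} e"
  proof
    assume "u = P ! 0 \<and> e = {x, P ! 0}"
    then show ?thesis
      using not_last adj by (auto simp: incompatible_nbrs_def incompatible_commute insert_commute)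
  qed (use partner_last in auto)
qed (use sqrt_mu_pos in auto)

lemma extension_smooth:
  assumes adj: "{P ! 0, x} \<in> E" and off: "x \<notin> set P"
    and not_first: "x \<notin> incompatible_nbrs E F (P ! 0) {P ! 0, P ! 1}"
    and through: "\<not> incompatible F {f x, x} {x, P ! 0}"
    and not_last: "x \<notin> incompatible_nbrs E F (P ! 0) {last P, P ! 0}"
    and partner_last: "\<not> incompatible F {last P, f x} {f x, x}"
    and partner_ok: "f x \<notin> X\<^sub>A \<union> not_good_A"
  shows "smooth (f x # x # P)"
proof -
  note x = extension_vertices[OF adj off]
  have "path_edges (f x # x # P) \<subseteq> E"
    unfolding path_edges_extension using x(4) adj path_edges_P by (simp add: insert_commute)
  then have path: "is_path E (f x # x # P)"
    using x(6) by (simp add: is_path_iff)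
  have matching_kept: "\<forall>j\<in>{1..k}. {a j, b j} \<in> path_edges (f x # x # P)"
    using P_proper unfolding path_edges_extension proper_def by blast
  have "set (f x # x # P) \<inter> A = insert (f x) (set P \<inter> A)"
    and "set (f x # x # P) \<inter> B = insert x (set P \<inter> B)"
    using x(1,2) bipartite_disjoint[OF bip] by auto
  then have proper: "proper A B a b f k (f x # x # P)"
    using P_proper x(5) matching_kept by (simp add: proper_def)
  show ?thesis
    using path proper extension_compatible[OF adj off not_first through]
      extension_first_good[OF adj off through] extension_last_good[OF adj off not_last partner_last]
      x(2) partner_ok last_B last_notin_X_B P_ne
    by (simp add: proper_smooth_def)
qed

subsection \<open>Obstructions\<close>

definition rotation_obstructions :: "nat set" where
  "rotation_obstructions =
     {i \<in> {..<length P}. 0 < i \<and> {P ! (i - 1), P ! i} \<in> (\<lambda>j. {a j, b j}) ` {1..k}} \<union>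
     {i \<in> {..<length P}. P ! i \<in> incompatible_nbrs E F (P ! 0) {P ! 0, P ! 1} \<union>
        bad_nbrs E F P (P ! 0) \<union> incompatible_nbrs E F (P ! 0) {last P, P ! 0}} \<union>
     {i \<in> {..<length P}. 0 < i \<and> P ! (i - 1) \<in> X\<^sub>A \<union> not_good_A}"

lemma finite_rotation_obstructions: "finite rotation_obstructions"
  by (simp add: rotation_obstructions_def)

lemma rotation_smooth_if_unobstructed:
  assumes "i < length P" "P ! i \<in> nbhd E (P ! 0)" "i \<notin> rotation_obstructions"
  shows "smooth (rotation i P)"
proof -
  have adj: "{P ! 0, P ! i} \<in> E" using assms(2) by (simp add: nbhd_def)
  then have "i \<noteq> 0" using bipartite_no_loop[OF bip, of "P ! 0"] by (cases i) auto
  then show ?thesis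
    using rotation_smooth[OF _ assms(1) adj] assms(1,3) by (simp add: rotation_obstructions_def)
qed

lemma card_rotation_obstructions_le:
  "real (card rotation_obstructions) \<le> (\<gamma> + 2 * \<mu> + 35 / 2 * sqrt \<mu>) * real m"
proof -
  let ?M = "(\<lambda>j. {a j, b j}) ` {1..k}"
    and ?W1 = "incompatible_nbrs E F (P ! 0) {P ! 0, P ! 1}"
    and ?W2 = "incompatible_nbrs E F (P ! 0) {last P, P ! 0}"
    and ?bad = "bad_nbrs E F P (P ! 0)"
  let ?R1 = "{i \<in> {..<length P}. 0 < i \<and> {P ! (i - 1), P ! i} \<in> ?M}"
    and ?R2 = "{i \<in> {..<length P}. P ! i \<in> ?W1 \<union> ?bad \<union> ?W2}"
    and ?R3 = "{i \<in> {..<length P}. 0 < i \<and> P ! (i - 1) \<in> X\<^sub>A \<union> not_good_A}"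
  have W: "finite ?W1" "finite ?W2" "real (card ?W1) \<le> \<mu> * real m" "real (card ?W2) \<le> \<mu> * real m"
    using card_incompatible_nbrs by auto
  have "0 \<le> \<gamma> * real m" using gamma_nonneg by simp
  then have "real k \<le> \<gamma> * real m" by linarith
  moreover have "card ?R1 \<le> card ?M" by (rule card_edge_indices_le[OF distinct_P]) simp
  moreover have "card ?M \<le> k" using card_image_le[of "{1..k}" "\<lambda>j. {a j, b j}"] by simp
  ultimately have R1: "real (card ?R1) \<le> \<gamma> * real m" by linarith
  have "card ?R2 \<le> card ?W1 + card ?bad + card ?W2"
    using card_nth_indices_le[OF distinct_P, of "?W1 \<union> ?bad \<union> ?W2"] W(1,2)
      card_Un_le[of ?W1 ?bad] card_Un_le[of "?W1 \<union> ?bad" ?W2] by simp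
  then have R2: "real (card ?R2) \<le> (2 * \<mu> + 16 * sqrt \<mu>) * real m"
    using W(3,4) card_bad_nbrs_first_le by (simp add: algebra_simps)
  have "card ?R3 \<le> card (X\<^sub>A \<union> not_good_A)"
    using card_predecessor_indices_le[OF distinct_P] card_X_A_Un_not_good_A by blast
  then have R3: "real (card ?R3) \<le> 3 / 2 * sqrt \<mu> * real m"
    using card_X_A_Un_not_good_A by linarith
  have "card rotation_obstructions \<le> card ?R1 + card ?R2 + card ?R3"
    unfolding rotation_obstructions_def
    using card_Un_le[of ?R1 ?R2] card_Un_le[of "?R1 \<union> ?R2" ?R3] by linarith
  then have "real (card rotation_obstructions) \<le> real (card ?R1) + real (card ?R2) + real (card ?R3)"
    by linarith
  then show ?thesis using R1 R2 R3 by (simp add: algebra_simps)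
qed

definition extension_obstructions :: "'a set" where
  "extension_obstructions =
     incompatible_nbrs E F (P ! 0) {P ! 0, P ! 1} \<union> incompatible_nbrs E F (P ! 0) {last P, P ! 0} \<union>
     b ` {i \<in> {1..m}. incompatible F {a i, b i} {P ! 0, b i}} \<union>
     b ` {i \<in> {1..m}. incompatible F {a i, b i} {a i, last P}} \<union>
     {x \<in> B. f x \<in> X\<^sub>A \<union> not_good_A}"

lemma nbrs_off_path_subset_extension_obstructions:
  "nbhd E (P ! 0) - set P \<subseteq> extension_obstructions"
proof
  fix x assume x: "x \<in> nbhd E (P ! 0) - set P"
  then have adj: "{P ! 0, x} \<in> E" and off: "x \<notin> set P" by (auto simp: nbhd_def)
  obtain j where j: "j \<in> {1..m}" "x = b j" "f x = a j"
    using matching_partner extension_vertices(1)[OF adj off] by blast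
  show "x \<in> extension_obstructions"
  proof (rule ccontr)
    assume obstructed: "x \<notin> extension_obstructions"
    have "\<not> incompatible F {f x, x} {x, P ! 0}"
    proof
      assume "incompatible F {f x, x} {x, P ! 0}"
      then have "incompatible F {a j, b j} {P ! 0, b j}" using j by (simp add: insert_commute)
      then show False using obstructed j by (auto simp: extension_obstructions_def)
    qed
    moreover have "\<not> incompatible F {last P, f x} {f x, x}"
    proof
      assume "incompatible F {last P, f x} {f x, x}"
      then have "incompatible F {a j, b j} {a j, last P}"
        using j by (simp add: incompatible_commute insert_commute)
      then show False using obstructed j by (auto simp: extension_obstructions_def)
    qed
    ultimately have "smooth (f x # x # P)"
      using extension_smooth[OF adj off] obstructed extension_vertices(1)[OF adj off]
      by (simp add: extension_obstructions_def)
    then show False using maximal off by blast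
  qed
qed

lemma card_extension_obstructions_le:
  "real (card extension_obstructions) \<le> (2 * \<mu> + 7 / 2 * sqrt \<mu>) * real m"
proof -
  let ?W1 = "incompatible_nbrs E F (P ! 0) {P ! 0, P ! 1}"
    and ?W2 = "incompatible_nbrs E F (P ! 0) {last P, P ! 0}"
    and ?S1 = "{i \<in> {1..m}. incompatible F {a i, b i} {P ! 0, b i}}"
    and ?S2 = "{i \<in> {1..m}. incompatible F {a i, b i} {a i, last P}}"
    and ?T = "{x \<in> B. f x \<in> X\<^sub>A \<union> not_good_A}"
  have W: "real (card ?W1) \<le> \<mu> * real m" "real (card ?W2) \<le> \<mu> * real m"
    using card_incompatible_nbrs by auto
  have "real (card (b ` ?S1)) \<le> sqrt \<mu> * real m"
    using first_notin_X_A first_A card_image_le[of ?S1 b] by (simp add: X_A_def)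
  moreover have "real (card (b ` ?S2)) \<le> sqrt \<mu> * real m"
    using last_notin_X_B last_B card_image_le[of ?S2 b] by (simp add: X_B_def)
  moreover have "card ?T \<le> card (X\<^sub>A \<union> not_good_A)"
  proof (rule card_inj_on_le)
    show "inj_on f ?T" using inj_on_f_B by (rule inj_on_subset) auto
  qed (use card_X_A_Un_not_good_A in auto)
  then have "real (card ?T) \<le> 3 / 2 * sqrt \<mu> * real m"
    using card_X_A_Un_not_good_A by linarith
  moreover have "card extension_obstructions \<le>
      card ?W1 + card ?W2 + card (b ` ?S1) + card (b ` ?S2) + card ?T"
    unfolding extension_obstructions_def
    using card_Un_le[of ?W1 ?W2] card_Un_le[of "?W1 \<union> ?W2" "b ` ?S1"]
      card_Un_le[of "?W1 \<union> ?W2 \<union> b ` ?S1" "b ` ?S2"]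
      card_Un_le[of "?W1 \<union> ?W2 \<union> b ` ?S1 \<union> b ` ?S2" ?T]
    by linarith
  ultimately show ?thesis using W by (simp add: algebra_simps)
qed

lemma finite_extension_obstructions: "finite extension_obstructions"
  using card_incompatible_nbrs finite_B by (simp add: extension_obstructions_def)

lemma smooth_rotations:
  "\<exists>Z. Z \<subseteq> nbhd E (hd P) \<inter> set P \<and>
     real (card Z) \<ge> real (deg E (hd P)) - (25 * sqrt \<mu> + 2 * \<gamma>) * real m \<and>
     (\<forall>i < length P. P ! i \<in> Z \<longrightarrow> smooth (rev (take i P) @ drop i P))"
proof -
  let ?N = "nbhd E (P ! 0)" and ?O = "nth P ` rotation_obstructions"
  define Z where "Z = ?N \<inter> set P - ?O"
  have rotations: "\<forall>i < length P. P ! i \<in> Z \<longrightarrow> smooth (rev (take i P) @ drop i P)"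
    using rotation_smooth_if_unobstructed by (auto simp: Z_def rotation_def)
  have "card ?N \<le> card (?N \<inter> set P) + card (?N - set P)"
    using card_Un_le[of "?N \<inter> set P" "?N - set P"] by (simp add: Int_Diff_Un)
  also have "card (?N \<inter> set P) \<le> card Z + card ?O"
    using card_Un_le[of Z ?O] card_mono[of "Z \<union> ?O" "?N \<inter> set P"] finite_rotation_obstructions
    by (auto simp: Z_def)
  also have "card ?O \<le> card rotation_obstructions"
    using card_image_le[OF finite_rotation_obstructions] .
  also have "card (?N - set P) \<le> card extension_obstructions"
    using card_mono[OF finite_extension_obstructions nbrs_off_path_subset_extension_obstructions] .
  finally have "real (card ?N) \<le>
      real (card Z) + (\<gamma> + 2 * \<mu> + 35 / 2 * sqrt \<mu>) * real m + (2 * \<mu> + 7 / 2 * sqrt \<mu>) * real m"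
    using card_rotation_obstructions_le card_extension_obstructions_le by linarith
  also have "\<dots> \<le> real (card Z) + (25 * sqrt \<mu> + 2 * \<gamma>) * real m"
  proof -
    have "\<mu> * real m \<le> sqrt \<mu> * real m" "0 \<le> \<gamma> * real m"
      using mult_right_mono[OF mu_le_sqrt_mu] gamma_nonneg by auto
    then show ?thesis by (simp add: algebra_simps)
  qed
  finally show ?thesis
    using rotations P_ne by (intro exI[of _ Z]) (auto simp: Z_def deg_def hd_conv_nth)
qed

end

theorem lemma4p4:
  fixes E :: "'a set set" and F :: "'a \<Rightarrow> 'a set set set"
    and A B :: "'a set" and a b :: "nat \<Rightarrow> 'a" and f :: "'a \<Rightarrow> 'a"
    and m :: nat and \<mu> \<beta> \<gamma> :: real and P :: "'a list"
  assumes pos: "\<mu> > 0" "\<beta> > 0" "\<gamma> > 0"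
    and small: "\<gamma> + \<beta> + sqrt \<mu> < 1 / 2000"
    and bip: "bipartite_graph E A B"
    and cardA: "card A = m" and cardB: "card B = m"
    and mindeg: "\<forall>v\<in>A \<union> B. real (deg E v) \<ge> real m / 10"
    and edges: "real (card E) \<ge> (1 - \<beta>) * real m ^ 2"
    and sys: "incompatibility_system E F"
    and bnd: "bounded_sys E F (\<mu> * real m)"
    and a_bij: "bij_betw a {1..m} A" and b_bij: "bij_betw b {1..m} B"
    and match: "\<forall>i\<in>{1..m}. {a i, b i} \<in> E"
    and f_def: "\<forall>i\<in>{1..m}. f (a i) = b i \<and> f (b i) = a i"
    and P_smooth: "proper_smooth E F A B a b f m \<mu> (nat \<lfloor>\<gamma> * real m\<rfloor>) P"
    and maximal: "\<forall>x. x \<notin> set P \<longrightarrow>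
                    \<not> proper_smooth E F A B a b f m \<mu> (nat \<lfloor>\<gamma> * real m\<rfloor>) (f x # x # P)"
  shows "\<exists>Z. Z \<subseteq> nbhd E (hd P) \<inter> set P \<and>
             real (card Z) \<ge> real (deg E (hd P)) - (25 * sqrt \<mu> + 2 * \<gamma>) * real m \<and>
             (\<forall>i < length P. P ! i \<in> Z \<longrightarrow>
                proper_smooth E F A B a b f m \<mu> (nat \<lfloor>\<gamma> * real m\<rfloor>)
                  (rev (take i P) @ drop i P))"
proof -
  have "sqrt \<mu> < 1" using small pos by linarith
  then have "\<mu> \<le> 1" by simp
  then interpret maximal_smooth_path E F A B a b f m \<mu> \<gamma> P
    using pos bip cardA cardB sys bnd a_bij b_bij match f_def P_smooth maximal
    by unfold_locales auto
  show ?thesis by (rule smooth_rotations)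
qed

end
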